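(* Let $\Phi\in\mathcal{O}(M)$, $\epsilon_0>0$, $\mathbf{Y}^{(1)},\dots,\mathbf{Y}^{(S)}\in\mathbb{R}^{M\times N}$, and $\mathbf{P}_n=\Phi(\boldsymbol{\Sigma}_{n,S}+\epsilon_0\mathbf{I})\Phi^\intercal$ for $n=1,\dots,N$. Define $$[\mathbf{G}]_{ab}=\frac1N\sum_{n=1}^N\Big(\frac{[\mathbf{P}_n]_{ab}}{[\mathbf{P}_n]_{aa}}-\delta_{ab}\Big),\qquad[\boldsymbol{\Gamma}]_{ab}=\frac1N\sum_{n=1}^N\frac{[\mathbf{P}_n]_{bb}}{[\mathbf{P}_n]_{aa}},$$ and the tensor $[\tilde{\mathcal{H}}]_{abcd}=\delta_{ac}\delta_{bd}[\boldsymbol{\Gamma}]_{ab}+\delta_{ad}\delta_{bc}-2\delta_{abcd}$. Then the matrix $\mathbf{E}$ defined by $[\mathbf{E}]_{ab}=-[\mathbf{G}^{(\mathrm{anti})}]_{ab}/([\boldsymbol{\Gamma}^{(\mathrm{sym})}]_{ab}-1)$ if $[\boldsymbol{\Gamma}^{(\mathrm{sym})}]_{ab}\neq1$ and $[\mathbf{E}]_{ab}=0$ otherwise belongs to $\Upsilon$ and is a solution of $$\min_{\mathbf{E}\in\Upsilon}\ \langle\mathbf{G},\mathbf{E}\rangle+\tfrac12\langle\mathbf{E}|\tilde{\mathcal{H}}|\mathbf{E}\rangle.$$ Moreover, if $\mathbf{G}^{(\mathrm{anti})}\neq\mathbf{0}$ then $\langle\mathbf{G},\mathbf{E}\rangl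e<0$.
   Context: $\mathcal{O}(M)$ is the group of real $M\times M$ orthogonal matrices; $\Upsilon=\{\mathbf{E}\in\mathbb{R}^{M\times M}:\mathbf{E}^\intercal=-\mathbf{E}\}$. $\boldsymbol{\Sigma}_{n,S}=\frac1S\sum_{s=1}^S\mathbf{y}_n^{(s)}(\mathbf{y}_n^{(s)})^\intercal$, where $\mathbf{y}_n^{(s)}$ is the $n$-th column of $\mathbf{Y}^{(s)}$. $\delta_{ab}$ is the Kronecker delta and $\delta_{abcd}=1$ if $a=b=c=d$, $0$ otherwise. $\langle\mathbf{G},\mathbf{E}\rangle=\sum_{a,b}[\mathbf{G}]_{ab}[\mathbf{E}]_{ab}$, $\langle\mathbf{E}|\tilde{\mathcal{H}}|\mathbf{E}\rangle=\sum_{a,b,c,d}[\tilde{\mathcal{H}}]_{abcd}[\mathbf{E}]_{ab}[\mathbf{E}]_{cd}$. $\mathbf{G}^{(\mathrm{anti})}=(\mathbf{G}-\mathbf{G}^\intercal)/2$ and $\boldsymbol{\Gamma}^{(\mathrm{sym})}=(\boldsymbol{\Gamma}+\boldsymbol{\Gamma}^\intercal)/2$. *)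

theory Defs
  imports "HOL-Analysis.Analysis"
begin

text \<open>Matrices are real^'m^'m (M x M), data matrices Y^(s) :: real^'n^'m (M x N);
  M = CARD('m), N = CARD('n). Row index a is the outer index: A $ a $ b = [A]_ab.\<close>

definition kdelta :: "'a \<Rightarrow> 'a \<Rightarrow> real" where
  "kdelta a b = (if a = b then 1 else 0)"

definition kdelta4 :: "'a \<Rightarrow> 'a \<Rightarrow> 'a \<Rightarrow> 'a \<Rightarrow> real" where
  "kdelta4 a b c d = (if a = b \<and> b = c \<and> c = d then 1 else 0)"

definition outer_prod :: "real^'m \<Rightarrow> real^'m \<Rightarrow> real^'m^'m" where
  "outer_prod x y = (\<chi> i j. x $ i * y $ j)"

definition Sigma_nS :: "nat \<Rightarrow> (nat \<Rightarrow> real^'n^'m) \<Rightarrow> 'n \<Rightarrow> real^'m^'m" where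
  "Sigma_nS S Y n = (1 / real S) *\<^sub>R (\<Sum>s\<in>{1..S}. outer_prod (column n (Y s)) (column n (Y s)))"

definition skew_mats :: "(real^'m^'m) set" where
  "skew_mats = {E. transpose E = - E}"

definition anti_part :: "real^'m^'m \<Rightarrow> real^'m^'m" where
  "anti_part A = (1/2) *\<^sub>R (A - transpose A)"

definition sym_part :: "real^'m^'m \<Rightarrow> real^'m^'m" where
  "sym_part A = (1/2) *\<^sub>R (A + transpose A)"

definition G_mat :: "('n::finite \<Rightarrow> real^'m^'m) \<Rightarrow> real^'m^'m" where
  "G_mat P = (\<chi> a b. (1 / real CARD('n)) *
      (\<Sum>n\<in>UNIV. P n $ a $ b / P n $ a $ a - kdelta a b))"

definition Gamma_mat :: "('n::finite \<Rightarrow> real^'m^'m) \<Rightarrow> real^'m^'m" where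
  "Gamma_mat P = (\<chi> a b. (1 / real CARD('n)) * (\<Sum>n\<in>UNIV. P n $ b $ b / P n $ a $ a))"

definition H_tensor :: "real^'m^'m \<Rightarrow> 'm \<Rightarrow> 'm \<Rightarrow> 'm \<Rightarrow> 'm \<Rightarrow> real" where
  "H_tensor Gam a b c d =
     kdelta a c * kdelta b d * Gam $ a $ b + kdelta a d * kdelta b c - 2 * kdelta4 a b c d"

definition frob_inner :: "real^'m^'m \<Rightarrow> real^'m^'m \<Rightarrow> real" where
  "frob_inner A E = (\<Sum>a\<in>UNIV. \<Sum>b\<in>UNIV. A $ a $ b * E $ a $ b)"

definition tensor_quad :: "('m \<Rightarrow> 'm \<Rightarrow> 'm \<Rightarrow> 'm \<Rightarrow> real) \<Rightarrow> real^'m^'m \<Rightarrow> real" where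
  "tensor_quad H E = (\<Sum>a\<in>UNIV. \<Sum>b\<in>UNIV. \<Sum>c\<in>UNIV. \<Sum>d\<in>UNIV.
      H a b c d * E $ a $ b * E $ c $ d)"

definition E_sol :: "real^'m^'m \<Rightarrow> real^'m^'m \<Rightarrow> real^'m^'m" where
  "E_sol G Gam = (\<chi> a b. if sym_part Gam $ a $ b \<noteq> 1
      then - anti_part G $ a $ b / (sym_part Gam $ a $ b - 1) else 0)"

end

theory Submission
  imports Defs
begin

text \<open>On a skew-symmetric \<open>E\<close> the quadratic model decouples entrywise: \<open>\<langle>G, E\<rangle> = \<langle>G\<^sup>a\<^sup>n\<^sup>t\<^sup>i, E\<rangle>\<close>
  and \<open>\<langle>E|H|E\<rangle> = \<Sum>\<^sub>a\<^sub>b ([\<Gamma>\<^sup>s\<^sup>y\<^sup>m]\<^sub>a\<^sub>b - 1) [E]\<^sub>a\<^sub>b\<^sup>2\<close>, so each entry is an independent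
  one-dimensional quadratic, minimized at \<open>-[G\<^sup>a\<^sup>n\<^sup>t\<^sup>i]\<^sub>a\<^sub>b / ([\<Gamma>\<^sup>s\<^sup>y\<^sup>m]\<^sub>a\<^sub>b - 1)\<close>. This needs
  \<open>[\<Gamma>\<^sup>s\<^sup>y\<^sup>m]\<^sub>a\<^sub>b \<ge> 1\<close>, which is AM-GM: with \<open>p = [P\<^sub>n]\<^sub>a\<^sub>a\<close> and \<open>q = [P\<^sub>n]\<^sub>b\<^sub>b\<close>, both positive
  because \<open>P\<^sub>n\<close> is an orthogonal congruence of a positive definite matrix, the excess
  \<open>[\<Gamma>\<^sup>s\<^sup>y\<^sup>m]\<^sub>a\<^sub>b - 1\<close> is the mean of \<open>(p - q)\<^sup>2 / (2 p q)\<close>. If the excess vanishes then \<open>p = q\<close>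
  for all \<open>n\<close>, and the symmetry of \<open>P\<^sub>n\<close> makes \<open>[G]\<^sub>a\<^sub>b = [G]\<^sub>b\<^sub>a\<close>, so that entry carries no
  linear term. At the minimizer \<open>\<langle>G, E\<rangle> = -\<Sum> [G\<^sup>a\<^sup>n\<^sup>t\<^sup>i]\<^sub>a\<^sub>b\<^sup>2 / ([\<Gamma>\<^sup>s\<^sup>y\<^sup>m]\<^sub>a\<^sub>b - 1)\<close>, which is
  negative as soon as \<open>G\<^sup>a\<^sup>n\<^sup>t\<^sup>i \<noteq> 0\<close>.\<close>

lemma congruence_diag:
  fixes Phi A :: "real^'m^'m"
  shows "(Phi ** A ** transpose Phi) $ a $ a = row a Phi \<bullet> (A *v row a Phi)"
  by (simp add: matrix_matrix_mult_def matrix_vector_mult_def inner_vec_def row_def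
      transpose_def sum_distrib_left sum_distrib_right mult_ac)
    (rule sum.swap[THEN trans], simp add: mult_ac)

lemma congruence_diag_pos:
  fixes Phi A :: "real^'m^'m"
  assumes "orthogonal_matrix Phi" and "\<And>x. x \<noteq> 0 \<Longrightarrow> 0 < x \<bullet> (A *v x)"
  shows "0 < (Phi ** A ** transpose Phi) $ a $ a"
proof -
  have "row a Phi \<noteq> 0"
    using assms(1) unfolding orthogonal_matrix_orthonormal_rows by (metis norm_zero zero_neq_one)
  then show ?thesis
    unfolding congruence_diag by (rule assms(2))
qed

lemma congruence_symmetric:
  fixes Phi A :: "real^'m^'m"
  assumes "transpose A = A"
  shows "(Phi ** A ** transpose Phi) $ a $ b = (Phi ** A ** transpose Phi) $ b $ a"
proof -
  have "transpose (Phi ** A ** transpose Phi) = Phi ** A ** transpose Phi"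
    using assms by (simp add: matrix_transpose_mul matrix_mul_assoc)
  then have "transpose (Phi ** A ** transpose Phi) $ b $ a = (Phi ** A ** transpose Phi) $ b $ a"
    by simp
  then show ?thesis
    by (simp add: transpose_def)
qed

lemma matrix_vector_mult_sum_left:
  fixes B :: "'s \<Rightarrow> 'a::comm_semiring_1^'n^'m"
  shows "(\<Sum>s\<in>T. B s) *v x = (\<Sum>s\<in>T. B s *v x)"
  by (simp add: vec_eq_iff matrix_vector_mult_def sum_component sum_distrib_right)
    (intro allI sum.swap)

lemma inner_outer_prod_self: "x \<bullet> (outer_prod y y *v x) = (y \<bullet> x)\<^sup>2"
  by (simp add: outer_prod_def matrix_vector_mult_def inner_vec_def power2_eq_square
      sum_distrib_left sum_distrib_right mult_ac)

lemma Sigma_nS_psd: "0 \<le> x \<bullet> (Sigma_nS S Y n *v x)"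
  by (simp add: Sigma_nS_def scaleR_matrix_vector_assoc[symmetric] inner_outer_prod_self
      matrix_vector_mult_sum_left inner_sum_right sum_nonneg)

lemma Sigma_nS_regularized_pd:
  assumes "0 < eps0" and "x \<noteq> 0"
  shows "0 < x \<bullet> ((Sigma_nS S Y n + eps0 *\<^sub>R mat 1) *v x)"
proof -
  have "x \<bullet> ((Sigma_nS S Y n + eps0 *\<^sub>R mat 1) *v x) = x \<bullet> (Sigma_nS S Y n *v x) + eps0 * (x \<bullet> x)"
    by (simp add: matrix_vector_mult_add_rdistrib scaleR_matrix_vector_assoc[symmetric] inner_add_right)
  then show ?thesis
    using Sigma_nS_psd[of x S Y n] assms by (simp add: add_nonneg_pos)
qed

lemma transpose_Sigma_nS_regularized:
  "transpose (Sigma_nS S Y n + eps0 *\<^sub>R mat 1) = Sigma_nS S Y n + eps0 *\<^sub>R mat 1"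
  by (simp add: Sigma_nS_def outer_prod_def transpose_def mat_def vec_eq_iff sum_component
      mult.commute)

lemma sym_part_Gamma_mat_minus_one:
  fixes P :: "'n::finite \<Rightarrow> real^'m^'m"
  assumes pos: "\<And>n a. 0 < P n $ a $ a"
  shows "sym_part (Gamma_mat P) $ a $ b - 1
    = (\<Sum>n\<in>UNIV. (P n $ a $ a - P n $ b $ b)\<^sup>2 / (2 * P n $ a $ a * P n $ b $ b)) / real CARD('n)"
proof -
  have summand: "(P n $ b $ b / P n $ a $ a + P n $ a $ a / P n $ b $ b) / 2 - 1
      = (P n $ a $ a - P n $ b $ b)\<^sup>2 / (2 * P n $ a $ a * P n $ b $ b)" for n
    using pos[of n a] pos[of n b] by (simp add: field_simps power2_eq_square)
  have "sym_part (Gamma_mat P) $ a $ b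
      = (\<Sum>n\<in>UNIV. (P n $ b $ b / P n $ a $ a + P n $ a $ a / P n $ b $ b) / 2) / real CARD('n)"
    by (simp add: sym_part_def Gamma_mat_def transpose_def sum.distrib sum_divide_distrib[symmetric]
        field_simps)
  moreover have "1 = (\<Sum>n\<in>(UNIV::'n set). 1) / real CARD('n)"
    by simp
  ultimately have "sym_part (Gamma_mat P) $ a $ b - 1
      = (\<Sum>n\<in>UNIV. (P n $ b $ b / P n $ a $ a + P n $ a $ a / P n $ b $ b) / 2 - 1) / real CARD('n)"
    by (simp add: sum_subtractf diff_divide_distrib)
  then show ?thesis
    by (simp only: summand)
qed

lemma one_le_sym_part_Gamma_mat:
  fixes P :: "'n::finite \<Rightarrow> real^'m^'m"
  assumes pos: "\<And>n a. 0 < P n $ a $ a"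
  shows "1 \<le> sym_part (Gamma_mat P) $ a $ b"
proof -
  have "0 \<le> (P n $ a $ a - P n $ b $ b)\<^sup>2 / (2 * P n $ a $ a * P n $ b $ b)" for n
    using pos[of n a] pos[of n b] by simp
  then have "0 \<le> sym_part (Gamma_mat P) $ a $ b - 1"
    unfolding sym_part_Gamma_mat_minus_one[OF pos] by (simp add: sum_nonneg)
  then show ?thesis
    by simp
qed

lemma anti_part_G_mat_eq_0_if_sym_part_Gamma_mat_eq_1:
  fixes P :: "'n::finite \<Rightarrow> real^'m^'m"
  assumes pos: "\<And>n a. 0 < P n $ a $ a" and sym: "\<And>n a b. P n $ a $ b = P n $ b $ a"
    and "sym_part (Gamma_mat P) $ a $ b = 1"
  shows "anti_part (G_mat P) $ a $ b = 0"
proof -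
  have nonneg: "0 \<le> (P n $ a $ a - P n $ b $ b)\<^sup>2 / (2 * P n $ a $ a * P n $ b $ b)" for n
    using pos[of n a] pos[of n b] by simp
  have "(\<Sum>n\<in>UNIV. (P n $ a $ a - P n $ b $ b)\<^sup>2 / (2 * P n $ a $ a * P n $ b $ b)) = 0"
    using sym_part_Gamma_mat_minus_one[where P=P and a=a and b=b, OF pos] assms(3) by simp
  then have zero: "(P n $ a $ a - P n $ b $ b)\<^sup>2 / (2 * P n $ a $ a * P n $ b $ b) = 0" for n
    using nonneg by (simp add: sum_nonneg_eq_0_iff)
  have diag: "P n $ a $ a = P n $ b $ b" for n
    using zero[of n] pos[of n a] pos[of n b] by simp
  have "G_mat P $ a $ b = G_mat P $ b $ a"
    unfolding G_mat_def using diag sym by (simp add: kdelta_def eq_commute)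
  then show ?thesis
    by (simp add: anti_part_def transpose_def)
qed

lemma skew_nth:
  assumes "transpose E = - E"
  shows "E $ b $ a = - E $ a $ b"
proof -
  have "transpose E $ a $ b = (- E) $ a $ b"
    using assms by simp
  then show ?thesis
    by (simp add: transpose_def)
qed

lemma frob_inner_anti_part:
  assumes "transpose E = - E"
  shows "frob_inner (anti_part G) E = frob_inner G E"
proof -
  have "(\<Sum>a\<in>UNIV. \<Sum>b\<in>UNIV. G $ b $ a * E $ a $ b) = (\<Sum>a\<in>UNIV. \<Sum>b\<in>UNIV. G $ a $ b * E $ b $ a)"
    by (rule sum.swap)
  also have "\<dots> = - frob_inner G E"
    unfolding frob_inner_def sum_negf[symmetric]
    by (intro sum.cong refl) (metis skew_nth[OF assms] mult_minus_right)
  finally have "(\<Sum>a\<in>UNIV. \<Sum>b\<in>UNIV. G $ b $ a * E $ a $ b) = - frob_inner G E" .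
  then show ?thesis
    by (simp add: frob_inner_def anti_part_def transpose_def left_diff_distrib sum_subtractf
        sum_divide_distrib[symmetric])
qed

lemma sum_sum_delta:
  fixes f :: "'a::finite \<Rightarrow> 'a \<Rightarrow> real"
  shows "(\<Sum>c\<in>UNIV. \<Sum>d\<in>UNIV. if c = p \<and> d = q then f c d else 0) = f p q"
proof -
  have "(\<Sum>d\<in>UNIV. if c = p \<and> d = q then f c d else 0) = (if c = p then f c q else 0)" for c
    by simp
  then show ?thesis
    by simp
qed

lemma H_tensor_contract:
  fixes Gam E :: "real^'m^'m"
  shows "(\<Sum>c\<in>UNIV. \<Sum>d\<in>UNIV. H_tensor Gam a b c d * E $ c $ d)
    = Gam $ a $ b * E $ a $ b + E $ b $ a - (if a = b then 2 * E $ a $ a else 0)"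
proof -
  have "H_tensor Gam a b c d * E $ c $ d
      = (if c = a \<and> d = b then Gam $ a $ b * E $ c $ d else 0)
        + (if c = b \<and> d = a then E $ c $ d else 0)
        - (if c = a \<and> d = a then (if a = b then 2 * E $ c $ d else 0) else 0)" for c d
    by (auto simp: H_tensor_def kdelta_def kdelta4_def left_diff_distrib distrib_right)
  then show ?thesis
    by (simp only: sum.distrib sum_subtractf sum_sum_delta)
qed

lemma tensor_quad_H_tensor_skew:
  fixes Gam E :: "real^'m^'m"
  assumes skew: "transpose E = - E"
  shows "tensor_quad (H_tensor Gam) E = (\<Sum>a\<in>UNIV. \<Sum>b\<in>UNIV. (sym_part Gam $ a $ b - 1) * (E $ a $ b)\<^sup>2)"
proof -
  have entry: "E $ a $ b * (Gam $ a $ b * E $ a $ b + E $ b $ a - (if a = b then 2 * E $ a $ a else 0))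
      = Gam $ a $ b * (E $ a $ b)\<^sup>2 - (E $ a $ b)\<^sup>2" for a b
  proof (cases "a = b")
    case True
    then show ?thesis
      using skew_nth[OF skew, of a a] by simp
  next
    case False
    then show ?thesis
      by (simp add: skew_nth[OF skew, of b a] power2_eq_square algebra_simps)
  qed
  have "(E $ b $ a)\<^sup>2 = (E $ a $ b)\<^sup>2" for a b
    using skew_nth[OF skew, of b a] by simp
  then have "(\<Sum>a\<in>UNIV. \<Sum>b\<in>UNIV. Gam $ b $ a * (E $ a $ b)\<^sup>2)
      = (\<Sum>a\<in>UNIV. \<Sum>b\<in>UNIV. Gam $ a $ b * (E $ a $ b)\<^sup>2)"
    by (subst sum.swap) simp
  then have sym: "(\<Sum>a\<in>UNIV. \<Sum>b\<in>UNIV. sym_part Gam $ a $ b * (E $ a $ b)\<^sup>2)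
      = (\<Sum>a\<in>UNIV. \<Sum>b\<in>UNIV. Gam $ a $ b * (E $ a $ b)\<^sup>2)"
    by (simp add: sym_part_def transpose_def distrib_left distrib_right sum.distrib
        sum_divide_distrib[symmetric])
  have "tensor_quad (H_tensor Gam) E
      = (\<Sum>a\<in>UNIV. \<Sum>b\<in>UNIV. E $ a $ b * (\<Sum>c\<in>UNIV. \<Sum>d\<in>UNIV. H_tensor Gam a b c d * E $ c $ d))"
    unfolding tensor_quad_def sum_distrib_left by (intro sum.cong refl) (simp only: mult_ac)
  also have "\<dots> = (\<Sum>a\<in>UNIV. \<Sum>b\<in>UNIV. Gam $ a $ b * (E $ a $ b)\<^sup>2 - (E $ a $ b)\<^sup>2)"
    by (simp only: H_tensor_contract entry)
  also have "\<dots> = (\<Sum>a\<in>UNIV. \<Sum>b\<in>UNIV. sym_part Gam $ a $ b * (E $ a $ b)\<^sup>2 - (E $ a $ b)\<^sup>2)"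
    by (simp only: sum_subtractf sym)
  finally show ?thesis
    by (simp only: left_diff_distrib mult_1)
qed

lemma quadratic_model_skew:
  fixes G Gam E :: "real^'m^'m"
  assumes "transpose E = - E"
  shows "frob_inner G E + 1/2 * tensor_quad (H_tensor Gam) E
    = (\<Sum>a\<in>UNIV. \<Sum>b\<in>UNIV. anti_part G $ a $ b * E $ a $ b
         + (sym_part Gam $ a $ b - 1) / 2 * (E $ a $ b)\<^sup>2)"
proof -
  have "frob_inner G E = frob_inner (anti_part G) E"
    by (rule frob_inner_anti_part[OF assms, symmetric])
  then show ?thesis
    by (simp add: tensor_quad_H_tensor_skew[OF assms] frob_inner_def sum.distrib sum_distrib_left)
qed

lemma E_sol_nth:
  "E_sol G Gam $ a $ b = (if sym_part Gam $ a $ b - 1 \<noteq> 0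
     then - anti_part G $ a $ b / (sym_part Gam $ a $ b - 1) else 0)"
  by (simp add: E_sol_def)

lemma E_sol_skew: "E_sol G Gam \<in> skew_mats"
proof -
  have entry: "E_sol G Gam $ b $ a = - E_sol G Gam $ a $ b" for a b
  proof -
    have "sym_part Gam $ b $ a = sym_part Gam $ a $ b"
      by (simp add: sym_part_def transpose_def add.commute)
    moreover have "anti_part G $ b $ a = - anti_part G $ a $ b"
      by (simp add: anti_part_def transpose_def field_simps)
    ultimately show ?thesis
      by (simp add: E_sol_nth)
  qed
  have "transpose (E_sol G Gam) $ a $ b = (- E_sol G Gam) $ a $ b" for a b
    using entry[of a b] by (simp add: transpose_def)
  then show ?thesis
    by (simp add: skew_mats_def vec_eq_iff)
qed

lemma quadratic_argmin:
  fixes c g x :: real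
  assumes "0 \<le> c" and "c = 0 \<Longrightarrow> g = 0"
  shows "g * (if c \<noteq> 0 then - g / c else 0) + c / 2 * (if c \<noteq> 0 then - g / c else 0)\<^sup>2
    \<le> g * x + c / 2 * x\<^sup>2"
proof (cases "c = 0")
  case True
  then show ?thesis
    using assms(2) by simp
next
  case False
  then have "0 < c"
    using assms(1) by simp
  then have "0 \<le> (c * x + g)\<^sup>2 / (2 * c)"
    by simp
  moreover have "g * x + c / 2 * x\<^sup>2 - (g * (- g / c) + c / 2 * (- g / c)\<^sup>2) = (c * x + g)\<^sup>2 / (2 * c)"
    using False by (simp add: field_simps power2_eq_square)
  ultimately show ?thesis
    unfolding if_P[OF False] by linarith
qed

lemma E_sol_minimizes:
  fixes G Gam E :: "real^'m^'m"
  assumes ge: "\<And>a b. 1 \<le> sym_part Gam $ a $ b"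
    and eq: "\<And>a b. sym_part Gam $ a $ b = 1 \<Longrightarrow> anti_part G $ a $ b = 0"
    and "E \<in> skew_mats"
  shows "frob_inner G (E_sol G Gam) + 1/2 * tensor_quad (H_tensor Gam) (E_sol G Gam)
    \<le> frob_inner G E + 1/2 * tensor_quad (H_tensor Gam) E"
proof -
  have skew: "transpose E = - E" and skew_sol: "transpose (E_sol G Gam) = - E_sol G Gam"
    using assms(3) E_sol_skew by (simp_all add: skew_mats_def)
  have "anti_part G $ a $ b * E_sol G Gam $ a $ b + (sym_part Gam $ a $ b - 1) / 2 * (E_sol G Gam $ a $ b)\<^sup>2
      \<le> anti_part G $ a $ b * E $ a $ b + (sym_part Gam $ a $ b - 1) / 2 * (E $ a $ b)\<^sup>2" for a b
    unfolding E_sol_nth by (rule quadratic_argmin) (use ge[of a b] eq[of a b] in simp_all)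
  then show ?thesis
    unfolding quadratic_model_skew[OF skew] quadratic_model_skew[OF skew_sol]
    by (intro sum_mono)
qed

lemma frob_inner_E_sol_neg:
  fixes G Gam :: "real^'m^'m"
  assumes ge: "\<And>a b. 1 \<le> sym_part Gam $ a $ b"
    and eq: "\<And>a b. sym_part Gam $ a $ b = 1 \<Longrightarrow> anti_part G $ a $ b = 0"
    and "anti_part G \<noteq> 0"
  shows "frob_inner G (E_sol G Gam) < 0"
proof -
  define descent where "descent a b = - anti_part G $ a $ b * E_sol G Gam $ a $ b" for a b
  have descent_eq: "descent a b = (if sym_part Gam $ a $ b - 1 \<noteq> 0
      then (anti_part G $ a $ b)\<^sup>2 / (sym_part Gam $ a $ b - 1) else 0)" for a b
    by (simp add: descent_def E_sol_nth power2_eq_square)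
  have nonneg: "0 \<le> descent a b" for a b
    using ge[of a b] by (simp add: descent_eq)
  obtain a0 b0 where "anti_part G $ a0 $ b0 \<noteq> 0"
    using assms(3) by (auto simp: vec_eq_iff)
  then have "0 < descent a0 b0"
    using ge[of a0 b0] eq[of a0 b0] by (auto simp: descent_eq)
  then have "0 < (\<Sum>a\<in>UNIV. \<Sum>b\<in>UNIV. descent a b)"
    using nonneg by (intro sum_pos2[of _ a0] sum_pos2[of _ b0] sum_nonneg) auto
  moreover have "frob_inner G (E_sol G Gam) = - (\<Sum>a\<in>UNIV. \<Sum>b\<in>UNIV. descent a b)"
    using E_sol_skew[of G Gam] frob_inner_anti_part[of "E_sol G Gam" G]
    by (simp add: skew_mats_def frob_inner_def descent_def sum_negf)
  ultimately show ?thesis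
    by simp
qed

theorem proposition4:
  fixes Phi :: "real^'m^'m" and eps0 :: real and S :: nat
    and Y :: "nat \<Rightarrow> real^'n^'m" and P :: "'n \<Rightarrow> real^'m^'m"
  assumes "orthogonal_matrix Phi"
    and "eps0 > 0"
    and "S \<ge> 1"
    and "\<And>n. P n = Phi ** (Sigma_nS S Y n + eps0 *\<^sub>R mat 1) ** transpose Phi"
  shows "E_sol (G_mat P) (Gamma_mat P) \<in> skew_mats
    \<and> (\<forall>E\<in>skew_mats.
          frob_inner (G_mat P) (E_sol (G_mat P) (Gamma_mat P))
            + 1/2 * tensor_quad (H_tensor (Gamma_mat P)) (E_sol (G_mat P) (Gamma_mat P))
          \<le> frob_inner (G_mat P) E + 1/2 * tensor_quad (H_tensor (Gamma_mat P)) E)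
    \<and> (anti_part (G_mat P) \<noteq> 0 \<longrightarrow> frob_inner (G_mat P) (E_sol (G_mat P) (Gamma_mat P)) < 0)"
proof -
  have pos: "0 < P n $ a $ a" for n a
    using congruence_diag_pos[OF assms(1) Sigma_nS_regularized_pd[OF assms(2)]] assms(4) by simp
  have sym: "P n $ a $ b = P n $ b $ a" for n a b
    using congruence_symmetric[OF transpose_Sigma_nS_regularized] assms(4) by simp
  note ge = one_le_sym_part_Gamma_mat[OF pos]
  note eq = anti_part_G_mat_eq_0_if_sym_part_Gamma_mat_eq_1[OF pos sym]
  show ?thesis
    by (intro conjI ballI impI E_sol_skew E_sol_minimizes[OF ge eq] frob_inner_E_sol_neg[OF ge eq])
qed

end
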